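(* Let $\Gamma$ be a finite connected $3$-valent vertex-transitive graph, let $G=\mathrm{Aut}(\Gamma)$, and suppose that for a vertex $v$ the permutation group induced by $G_v$ on $\Gamma(v)$ is transitive. Let $s\ge1$ be such that $G$ is transitive on $s$-arcs but not on $(s+1)$-arcs. Let $g\in G\setminus\{1\}$ with $\mathrm{fpr}(E\Gamma,g)>1/3$. Then $$2|F(\Gamma,g)|+3|V_1(\Gamma,g)|+|V_3(\Gamma,g)|\le|V\Gamma|.$$
   Context: An $s$-arc is a sequence $(v_0,\dots,v_s)$ of vertices with $v_i\sim v_{i+1}$ and $v_i\ne v_{i+2}$. $\mathrm{fpr}(E\Gamma,g)$ is the proportion of edges $\{a,b\}$ with $\{a^g,b^g\}=\{a,b\}$. $A(\Gamma,g)$ is the set of edges $\{a,b\}$ with $a^g=a$, $b^g=b$; $F(\Gamma,g)$ is the set of edges $\{a,b\}$ with $a^g=b$, $b^g=a$, $a\ne b$. $\Gamma[g]$ is the subgraph with edge set $A(\Gamma,g)$ and vertex set the vertices incident with edges of $A(\Gamma,g)$; its vertices have valency $1$ or $3$ in $\Gamma[g]$, and $V_i(\Gamma,g)$, $i\in\{1,3\}$, is the set of vertices of $\Gamma[g]$ of valency $i$ in $\Gamma[g]$. *)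

theory Defs
  imports Complex_Main
begin

definition simple_graph :: "'a set \<Rightarrow> ('a \<Rightarrow> 'a \<Rightarrow> bool) \<Rightarrow> bool" where
  "simple_graph V E \<longleftrightarrow> finite V \<and> (\<forall>a b. E a b \<longrightarrow> a \<in> V \<and> b \<in> V)
     \<and> (\<forall>a b. E a b \<longrightarrow> E b a) \<and> (\<forall>a. \<not> E a a)"

definition connected_graph :: "'a set \<Rightarrow> ('a \<Rightarrow> 'a \<Rightarrow> bool) \<Rightarrow> bool" where
  "connected_graph V E \<longleftrightarrow> (\<forall>u\<in>V. \<forall>w\<in>V. E\<^sup>*\<^sup>* u w)"

definition nbhd :: "('a \<Rightarrow> 'a \<Rightarrow> bool) \<Rightarrow> 'a \<Rightarrow> 'a set" where
  "nbhd E v = {w. E v w}"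

definition cubic :: "'a set \<Rightarrow> ('a \<Rightarrow> 'a \<Rightarrow> bool) \<Rightarrow> bool" where
  "cubic V E \<longleftrightarrow> (\<forall>v\<in>V. card (nbhd E v) = 3)"

definition Aut :: "'a set \<Rightarrow> ('a \<Rightarrow> 'a \<Rightarrow> bool) \<Rightarrow> ('a \<Rightarrow> 'a) set" where
  "Aut V E = {g. bij_betw g V V \<and> (\<forall>x. x \<notin> V \<longrightarrow> g x = x)
                 \<and> (\<forall>a\<in>V. \<forall>b\<in>V. E a b \<longleftrightarrow> E (g a) (g b))}"

definition vertex_transitive :: "'a set \<Rightarrow> ('a \<Rightarrow> 'a \<Rightarrow> bool) \<Rightarrow> bool" where
  "vertex_transitive V E \<longleftrightarrow> (\<forall>u\<in>V. \<forall>w\<in>V. \<exists>g\<in>Aut V E. g u = w)"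

definition arcs :: "'a set \<Rightarrow> ('a \<Rightarrow> 'a \<Rightarrow> bool) \<Rightarrow> nat \<Rightarrow> 'a list set" where
  "arcs V E s = {xs. length xs = s + 1 \<and> set xs \<subseteq> V
      \<and> (\<forall>i<s. E (xs ! i) (xs ! (i + 1)))
      \<and> (\<forall>i. i + 2 \<le> s \<longrightarrow> xs ! i \<noteq> xs ! (i + 2))}"

definition arc_transitive :: "'a set \<Rightarrow> ('a \<Rightarrow> 'a \<Rightarrow> bool) \<Rightarrow> nat \<Rightarrow> bool" where
  "arc_transitive V E s \<longleftrightarrow>
     (\<forall>x\<in>arcs V E s. \<forall>y\<in>arcs V E s. \<exists>g\<in>Aut V E. map g x = y)"

definition edges :: "'a set \<Rightarrow> ('a \<Rightarrow> 'a \<Rightarrow> bool) \<Rightarrow> 'a set set" where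
  "edges V E = {{a, b} | a b. a \<in> V \<and> b \<in> V \<and> E a b}"

definition fpr_edges :: "'a set \<Rightarrow> ('a \<Rightarrow> 'a \<Rightarrow> bool) \<Rightarrow> ('a \<Rightarrow> 'a) \<Rightarrow> real" where
  "fpr_edges V E g = real (card {e \<in> edges V E. g ` e = e}) / real (card (edges V E))"

definition A_edges :: "'a set \<Rightarrow> ('a \<Rightarrow> 'a \<Rightarrow> bool) \<Rightarrow> ('a \<Rightarrow> 'a) \<Rightarrow> 'a set set" where
  "A_edges V E g = {{a, b} | a b. a \<in> V \<and> b \<in> V \<and> E a b \<and> g a = a \<and> g b = b}"

definition F_edges :: "'a set \<Rightarrow> ('a \<Rightarrow> 'a \<Rightarrow> bool) \<Rightarrow> ('a \<Rightarrow> 'a) \<Rightarrow> 'a set set" where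
  "F_edges V E g = {{a, b} | a b. a \<in> V \<and> b \<in> V \<and> E a b \<and> g a = b \<and> g b = a \<and> a \<noteq> b}"

definition fix_valency :: "'a set \<Rightarrow> ('a \<Rightarrow> 'a \<Rightarrow> bool) \<Rightarrow> ('a \<Rightarrow> 'a) \<Rightarrow> 'a \<Rightarrow> nat" where
  "fix_valency V E g v = card {e \<in> A_edges V E g. v \<in> e}"

definition Vi :: "'a set \<Rightarrow> ('a \<Rightarrow> 'a \<Rightarrow> bool) \<Rightarrow> ('a \<Rightarrow> 'a) \<Rightarrow> nat \<Rightarrow> 'a set" where
  "Vi V E g i = {v \<in> V. (\<exists>e\<in>A_edges V E g. v \<in> e) \<and> fix_valency V E g v = i}"

end

theory Submission
  imports Defs "HOL-Combinatorics.Permutations"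
begin

text \<open>An edge fixed by \<open>g\<close> is either an edge of \<open>\<Gamma>[g]\<close> (the set \<open>A\<close>) or flipped by \<open>g\<close> (the set
  \<open>F\<close>); as \<open>2|E\<Gamma>| = 3|V\<Gamma>|\<close>, the hypothesis \<open>fpr > 1/3\<close> becomes \<open>|V\<Gamma>| < 2|A| + 2|F|\<close>.

  A vertex \<open>v\<close> of \<open>\<Gamma>[g]\<close> with a moved neighbour \<open>x\<close> also has the moved neighbour \<open>x\<^sup>g\<close>. Call the pair
  \<open>{x, x\<^sup>g}\<close> private if \<open>x\<close> and \<open>x\<^sup>g\<close> are not adjacent and no other fixed vertex is adjacent to both.
  If all these pairs are private, the pairs of moved neighbours of the vertices in \<open>V\<^sub>1\<close> and the
  edges in \<open>F\<close> are disjoint sets of moved vertices, so \<open>2|F| + 2|V\<^sub>1|\<close> is at most the number of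
  moved vertices, while \<open>|V\<^sub>1| + |V\<^sub>3|\<close> is at most the number of fixed ones; adding gives the claim.

  A pair that is not private lies on a triangle or a 4-cycle. Since the group is \<open>s\<close>- but not
  \<open>(s+1)\<close>-arc transitive, an automorphism fixing an \<open>s\<close>-arc pointwise is trivial. This excludes
  \<open>s = 1\<close>; for \<open>s = 2\<close> it bounds the valencies in \<open>\<Gamma>[g]\<close> by 1, for \<open>s = 3\<close> the 4-cycle forces
  \<open>\<Gamma> = K\<^sub>3\<^sub>,\<^sub>3\<close>, and for \<open>s \<ge> 4\<close> there are no such short cycles. In the two remaining cases
  \<open>2|A| + 2|F| \<le> |V\<Gamma>|\<close>, contradicting the first inequality.\<close>

lemma Aut_iff_permutes:
  "h \<in> Aut V E \<longleftrightarrow> h permutes V \<and> (\<forall>a\<in>V. \<forall>b\<in>V. E a b \<longleftrightarrow> E (h a) (h b))"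
  by (auto simp: Aut_def permutes_imp_bij permutes_not_in intro: bij_imp_permutes)

lemma Aut_permutes: "h \<in> Aut V E \<Longrightarrow> h permutes V"
  by (simp add: Aut_iff_permutes)

lemma Aut_in_V_iff: "h \<in> Aut V E \<Longrightarrow> h x \<in> V \<longleftrightarrow> x \<in> V"
  by (rule permutes_in_image[OF Aut_permutes])

lemma Aut_eq_iff: "h \<in> Aut V E \<Longrightarrow> h x = h y \<longleftrightarrow> x = y"
  by (rule inj_eq[OF permutes_inj[OF Aut_permutes]])

lemma Aut_adj_iff: "h \<in> Aut V E \<Longrightarrow> a \<in> V \<Longrightarrow> b \<in> V \<Longrightarrow> E (h a) (h b) \<longleftrightarrow> E a b"
  by (simp add: Aut_iff_permutes)

lemma Aut_compose: assumes "h \<in> Aut V E" "k \<in> Aut V E" shows "h \<circ> k \<in> Aut V E"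
proof -
  have "E a b \<longleftrightarrow> E (h (k a)) (h (k b))" if "a \<in> V" "b \<in> V" for a b
    using that assms by (simp add: Aut_adj_iff Aut_in_V_iff)
  then show ?thesis
    unfolding Aut_iff_permutes
    using permutes_compose[OF Aut_permutes[OF assms(2)] Aut_permutes[OF assms(1)]] by simp
qed

lemma Aut_inv: assumes "h \<in> Aut V E" shows "inv h \<in> Aut V E"
proof -
  have h: "h permutes V" using assms by (rule Aut_permutes)
  have "E a b \<longleftrightarrow> E (inv h a) (inv h b)" if "a \<in> V" "b \<in> V" for a b
    using Aut_adj_iff[OF assms, of "inv h a" "inv h b"] that
    by (simp add: permutes_inverses[OF h] permutes_in_image[OF permutes_inv[OF h]])
  then show ?thesis by (simp add: Aut_iff_permutes permutes_inv[OF h])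
qed

lemma Aut_inv_apply: "h \<in> Aut V E \<Longrightarrow> inv h (h x) = x"
  by (rule permutes_inverses(2)[OF Aut_permutes])

lemma Aut_eq_id: assumes "h \<in> Aut V E" "\<forall>x\<in>V. h x = x" shows "h = id"
proof
  fix x show "h x = id x"
    using assms permutes_not_in[OF Aut_permutes[OF assms(1)]] by (cases "x \<in> V") auto
qed

lemma arcs_take: "xs \<in> arcs V E u \<Longrightarrow> t \<le> u \<Longrightarrow> take (t + 1) xs \<in> arcs V E t"
  unfolding arcs_def by (auto dest: in_set_takeD)

lemma arcs_tl: "xs \<in> arcs V E (Suc t) \<Longrightarrow> tl xs \<in> arcs V E t"
  unfolding arcs_def by (auto simp: nth_tl dest: list.set_sel(2)[rotated])

lemma sum_card_incident_doubletons:
  assumes "finite V" "\<And>e. e \<in> X \<Longrightarrow> e \<subseteq> V \<and> card e = 2"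
  shows "(\<Sum>z\<in>V. card {e\<in>X. z \<in> e}) = 2 * card X"
proof -
  have fX: "finite X" using assms by (metis Pow_iff finite_Pow_iff rev_finite_subset subsetI)
  have "(\<Sum>z\<in>V. card {e\<in>X. z \<in> e}) = (\<Sum>z\<in>V. \<Sum>e\<in>X. if z \<in> e then 1 else 0)"
    using fX by (simp add: sum.If_cases Int_def)
  also have "\<dots> = (\<Sum>e\<in>X. \<Sum>z\<in>V. if z \<in> e then 1 else 0)" by (rule sum.swap)
  also have "\<dots> = (\<Sum>e\<in>X. 2)"
  proof (rule sum.cong[OF refl])
    fix e assume "e \<in> X"
    then have "V \<inter> e = e" "card e = 2" using assms(2) by auto
    then show "(\<Sum>z\<in>V. if z \<in> e then 1 else 0) = (2::nat)"
      using assms(1) by (simp add: sum.If_cases)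
  qed
  finally show ?thesis by simp
qed

lemma card_fixed_moved_partition:
  "finite V \<Longrightarrow> card V = card {z\<in>V. g z = z} + card {z\<in>V. g z \<noteq> z}"
  by (subst card_Un_disjoint[symmetric]) (auto intro: arg_cong[where f = card])

locale cubic_graph =
  fixes V :: "'a set" and E :: "'a \<Rightarrow> 'a \<Rightarrow> bool"
  assumes simple: "simple_graph V E" and connected: "connected_graph V E" and cubic: "cubic V E"
begin

lemma finite_V: "finite V"
  using simple by (simp add: simple_graph_def)

lemma adj_in_V: "E a b \<Longrightarrow> a \<in> V \<and> b \<in> V"
  using simple by (simp add: simple_graph_def)

lemma adj_sym: "E a b \<Longrightarrow> E b a"
  using simple by (simp add: simple_graph_def)

lemma adj_irrefl: "\<not> E a a"
  using simple by (simp add: simple_graph_def)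

lemma card_nbhd: "x \<in> V \<Longrightarrow> card (nbhd E x) = 3"
  using cubic by (simp add: cubic_def)

lemma finite_nbhd: "x \<in> V \<Longrightarrow> finite (nbhd E x)"
  using card_nbhd card.infinite by fastforce

lemma finite_adj_set: "x \<in> V \<Longrightarrow> finite {u. E x u \<and> P u}"
  using finite_nbhd by (rule rev_finite_subset) (auto simp: nbhd_def)

lemma exists_third_neighbour:
  assumes "x \<in> V" shows "\<exists>t. E x t \<and> t \<noteq> a \<and> t \<noteq> b"
proof -
  have "card (nbhd E x) - card {a, b} \<le> card (nbhd E x - {a, b})"
    by (rule diff_card_le_card_Diff) simp
  moreover have "card {a, b} \<le> 2"
    by (simp add: card_insert_le_m1)
  ultimately have "card (nbhd E x - {a, b}) \<noteq> 0"
    using card_nbhd[OF assms] by linarith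
  then obtain t where "t \<in> nbhd E x - {a, b}"
    by (metis card.empty ex_in_conv)
  then show ?thesis by (auto simp: nbhd_def)
qed

lemma nbhd_eq_three_neighbours:
  assumes "a \<in> V" "E a p" "E a q" "E a r" "p \<noteq> q" "p \<noteq> r" "q \<noteq> r"
  shows "nbhd E a = {p, q, r}"
proof -
  have "{p, q, r} \<subseteq> nbhd E a" "card {p, q, r} = 3"
    using assms by (auto simp: nbhd_def)
  then show ?thesis
    using card_nbhd[OF assms(1)] finite_nbhd[OF assms(1)] by (metis card_seteq order_refl)
qed

lemma adj_iff_in_nbhd: "E a b \<longleftrightarrow> b \<in> nbhd E a"
  by (simp add: nbhd_def)

lemma Aut_adj: assumes "h \<in> Aut V E" "E a b" shows "E (h a) (h b)"
  using Aut_adj_iff[OF assms(1)] adj_in_V[OF assms(2)] assms(2) by blast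

lemma arcs_snoc:
  assumes "xs \<in> arcs V E t" "E (xs ! t) w" "t \<ge> 1 \<Longrightarrow> w \<noteq> xs ! (t - 1)"
  shows "xs @ [w] \<in> arcs V E (Suc t)"
proof -
  from assms(1) have l: "length xs = t + 1" and s: "set xs \<subseteq> V"
    and e: "\<forall>i<t. E (xs ! i) (xs ! (i + 1))" and n: "\<forall>i. i + 2 \<le> t \<longrightarrow> xs ! i \<noteq> xs ! (i + 2)"
    by (auto simp: arcs_def)
  have "E ((xs @ [w]) ! i) ((xs @ [w]) ! (i + 1))" if "i < Suc t" for i
    using that e l assms(2) by (cases "i = t") (auto simp: nth_append)
  moreover have "(xs @ [w]) ! i \<noteq> (xs @ [w]) ! (i + 2)" if "i + 2 \<le> Suc t" for i
    using that n l assms(3) by (cases "i + 1 = t") (auto simp: nth_append)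
  ultimately show ?thesis
    using l s adj_in_V[OF assms(2)] by (simp add: arcs_def)
qed

lemma arcs_shift:
  assumes "xs \<in> arcs V E s" "s \<ge> 1" "E (xs ! s) w" "w \<noteq> xs ! (s - 1)"
  shows "tl xs @ [w] \<in> arcs V E s"
proof -
  have "xs @ [w] \<in> arcs V E (Suc s)" using arcs_snoc[OF assms(1,3)] assms(4) by blast
  then have "tl (xs @ [w]) \<in> arcs V E s" by (rule arcs_tl)
  moreover have "xs \<noteq> []" using assms(1) by (auto simp: arcs_def)
  ultimately show ?thesis by simp
qed

lemma arcs_rev: assumes "xs \<in> arcs V E t" shows "rev xs \<in> arcs V E t"
proof -
  from assms have l: "length xs = t + 1" and s: "set xs \<subseteq> V"
    and e: "\<forall>i<t. E (xs ! i) (xs ! (i + 1))" and n: "\<forall>i. i + 2 \<le> t \<longrightarrow> xs ! i \<noteq> xs ! (i + 2)"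
    by (auto simp: arcs_def)
  have r: "\<And>i. i \<le> t \<Longrightarrow> rev xs ! i = xs ! (t - i)" using l by (simp add: rev_nth)
  have "E (rev xs ! i) (rev xs ! (i + 1))" if i: "i < t" for i
  proof -
    have "E (xs ! (t - i - 1)) (xs ! (t - i - 1 + 1))" using e i by simp
    moreover have "t - i - 1 + 1 = t - i" using i by simp
    ultimately show ?thesis using r i adj_sym
      by (metis Suc_eq_plus1 Suc_leI diff_diff_left less_imp_le_nat)
  qed
  moreover have "rev xs ! i \<noteq> rev xs ! (i + 2)" if i: "i + 2 \<le> t" for i
  proof -
    have "xs ! (t - i - 2) \<noteq> xs ! (t - i - 2 + 2)" using n i by simp
    moreover have "t - i - 2 + 2 = t - i" using i by simp
    ultimately show ?thesis using r i by (metis add_leD1 diff_diff_left)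
  qed
  ultimately show ?thesis using l s by (simp add: arcs_def)
qed

lemma arcs_extend: assumes "xs \<in> arcs V E t" shows "\<exists>w. xs @ [w] \<in> arcs V E (Suc t)"
proof -
  have "length xs = t + 1" "set xs \<subseteq> V" using assms by (auto simp: arcs_def)
  then have "xs ! t \<in> V" by (metis less_add_one nth_mem subsetD)
  then obtain w where "E (xs ! t) w" "w \<noteq> xs ! (t - 1)"
    using exists_third_neighbour by blast
  then show ?thesis using arcs_snoc[OF assms] by blast
qed

lemma arcs_extend_to:
  assumes "xs \<in> arcs V E t" "t \<le> u" shows "\<exists>ys \<in> arcs V E u. take (t + 1) ys = xs"
  using assms(2)
proof (induction u)
  case 0
  then show ?case using assms(1) by (auto simp: arcs_def)
next
  case (Suc u)
  show ?case
  proof (cases "t = Suc u")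
    case True
    then show ?thesis using assms(1) by (auto simp: arcs_def)
  next
    case False
    then obtain ys where ys: "ys \<in> arcs V E u" "take (t + 1) ys = xs"
      using Suc by auto
    obtain w where w: "ys @ [w] \<in> arcs V E (Suc u)" using arcs_extend[OF ys(1)] by blast
    have "length ys = u + 1" using ys(1) by (simp add: arcs_def)
    then have "take (t + 1) (ys @ [w]) = xs" using ys(2) False Suc.prems by simp
    then show ?thesis using w by blast
  qed
qed

lemma arc_transitive_le:
  assumes "arc_transitive V E u" "t \<le> u" shows "arc_transitive V E t"
  unfolding arc_transitive_def
proof (intro ballI)
  fix x y assume "x \<in> arcs V E t" "y \<in> arcs V E t"
  then obtain X Y where X: "X \<in> arcs V E u" "take (t + 1) X = x"
    and Y: "Y \<in> arcs V E u" "take (t + 1) Y = y"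
    using arcs_extend_to assms(2) by meson
  obtain h where "h \<in> Aut V E" "map h X = Y"
    using assms(1) X(1) Y(1) unfolding arc_transitive_def by blast
  moreover from this have "map h x = y" using X(2) Y(2) by (metis take_map)
  ultimately show "\<exists>g\<in>Aut V E. map g x = y" by blast
qed

lemma arcs_1I: "E a b \<Longrightarrow> [a, b] \<in> arcs V E 1"
  using adj_in_V by (auto simp: arcs_def)

lemma arcs_2I: "E a b \<Longrightarrow> E b c \<Longrightarrow> a \<noteq> c \<Longrightarrow> [a, b, c] \<in> arcs V E 2"
  using adj_in_V by (auto simp: arcs_def less_Suc_eq numeral_eq_Suc)

lemma arcs_3I:
  "E a b \<Longrightarrow> E b c \<Longrightarrow> E c d \<Longrightarrow> a \<noteq> c \<Longrightarrow> b \<noteq> d \<Longrightarrow> [a, b, c, d] \<in> arcs V E 3"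
  using adj_in_V by (auto simp: arcs_def less_Suc_eq numeral_eq_Suc le_Suc_eq)

lemma arcs_4I:
  "E a b \<Longrightarrow> E b c \<Longrightarrow> E c d \<Longrightarrow> E d e \<Longrightarrow> a \<noteq> c \<Longrightarrow> b \<noteq> d \<Longrightarrow> c \<noteq> e
   \<Longrightarrow> [a, b, c, d, e] \<in> arcs V E 4"
  using adj_in_V by (auto simp: arcs_def less_Suc_eq numeral_eq_Suc le_Suc_eq)

section \<open>Automorphisms fixing an s-arc\<close>

lemma other_neighbours_swapped:
  assumes g: "g \<in> Aut V E" and "E u v" "g u = u" "g v = v" and w: "E v w" "w \<noteq> u" "g w \<noteq> w"
  shows "nbhd E v - {u} = {w, g w}" "g (g w) = w"
proof -
  let ?N = "nbhd E v - {u}"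
  have "v \<in> V" "u \<in> nbhd E v" using assms(2) adj_in_V adj_sym by (auto simp: nbhd_def)
  then have N2: "card ?N = 2" and finN: "finite ?N"
    using card_nbhd finite_nbhd by (simp_all add: card_Diff_singleton)
  have gN: "g x \<in> ?N" if "x \<in> ?N" for x
    using that Aut_adj[OF g, of v x] Aut_eq_iff[OF g, of x u] assms(3,4) by (auto simp: nbhd_def)
  have "{w, g w} \<subseteq> ?N" "card {w, g w} = 2" using w gN by (auto simp: nbhd_def)
  then show N: "?N = {w, g w}" using N2 finN by (metis card_seteq order_refl)
  show "g (g w) = w" using N gN[of "g w"] Aut_eq_iff[OF g, of "g w" w] w(3) by auto
qed

context
  fixes s :: nat
  assumes s_pos: "s \<ge> 1" and s_trans: "arc_transitive V E s"
    and not_trans: "\<not> arc_transitive V E (s + 1)"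
begin

lemma arc_map_to_extension:
  assumes "\<beta> \<in> arcs V E s" "X \<in> arcs V E (Suc s)"
  shows "\<exists>a\<in>Aut V E. \<exists>u. E (\<beta> ! s) u \<and> u \<noteq> \<beta> ! (s - 1) \<and> map a X = \<beta> @ [u]"
proof -
  have lX: "length X = s + 2" using assms(2) by (simp add: arcs_def)
  obtain a where a: "a \<in> Aut V E" "map a (take (s + 1) X) = \<beta>"
    using s_trans assms(1) arcs_take[OF assms(2) le_SucI[OF le_refl]]
    unfolding arc_transitive_def by blast
  have \<beta>_nth: "\<beta> ! i = a (X ! i)" if "i \<le> s" for i
    using that lX by (simp flip: a(2))
  have "X = take (s + 1) X @ [X ! (s + 1)]"
    using take_Suc_conv_app_nth[of "s + 1" X] lX by simp
  then have "map a X = \<beta> @ [a (X ! (s + 1))]"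
    using a(2) by (metis list.map(1) list.map(2) map_append)
  moreover have "E (X ! s) (X ! (s + 1))" "X ! (s - 1) \<noteq> X ! (s + 1)"
    using assms(2) s_pos unfolding arcs_def
    by (auto dest!: spec[of _ "s - 1"])
  ultimately show ?thesis
    using Aut_adj[OF a(1)] Aut_eq_iff[OF a(1)] \<beta>_nth[of s] \<beta>_nth[of "s - 1"]
    by (intro bexI[OF _ a(1)] exI[of _ "a (X ! (s + 1))"]) auto
qed

text \<open>If an automorphism fixing the s-arc \<open>\<beta>\<close> swapped its two extensions, every (s+1)-arc could
  be moved onto every other one.\<close>
lemma Aut_fixing_arc_fixes_extension:
  assumes g: "g \<in> Aut V E" and \<beta>: "\<beta> \<in> arcs V E s" "\<forall>z\<in>set \<beta>. g z = z"
    and w: "E (\<beta> ! s) w" "w \<noteq> \<beta> ! (s - 1)"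
  shows "g w = w"
proof (rule ccontr)
  assume gw: "g w \<noteq> w"
  define N where "N = nbhd E (\<beta> ! s) - {\<beta> ! (s - 1)}"
  have "E (\<beta> ! (s - 1)) (\<beta> ! (s - 1 + 1))"
    using \<beta>(1) s_pos unfolding arcs_def by (auto dest!: spec[of _ "s - 1"])
  then have "E (\<beta> ! (s - 1)) (\<beta> ! s)" using s_pos by simp
  moreover have "length \<beta> = s + 1" using \<beta>(1) by (simp add: arcs_def)
  then have "g (\<beta> ! (s - 1)) = \<beta> ! (s - 1)" "g (\<beta> ! s) = \<beta> ! s" using \<beta>(2) by auto
  ultimately have N: "N = {w, g w}" "g (g w) = w"
    using other_neighbours_swapped[OF g _ _ _ w gw] unfolding N_def by blast+
  have swap: "\<exists>c\<in>Aut V E. map c \<beta> = \<beta> \<and> c u1 = u2" if "u1 \<in> N" "u2 \<in> N" for u1 u2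
  proof (cases "u1 = u2")
    case True
    moreover have "id \<in> Aut V E" by (simp add: Aut_iff_permutes)
    ultimately show ?thesis by (intro bexI[of _ id]) auto
  next
    case False
    have "map g \<beta> = \<beta>" using \<beta>(2) by (simp add: map_idI)
    with False show ?thesis using that N by (intro bexI[OF _ g]) auto
  qed
  have "arc_transitive V E (Suc s)"
    unfolding arc_transitive_def
  proof (intro ballI)
    fix X Y assume "X \<in> arcs V E (Suc s)" "Y \<in> arcs V E (Suc s)"
    then obtain a b u1 u2 where a: "a \<in> Aut V E" "u1 \<in> N" "map a X = \<beta> @ [u1]"
      and b: "b \<in> Aut V E" "u2 \<in> N" "map b Y = \<beta> @ [u2]"
      using arc_map_to_extension[OF \<beta>(1)] unfolding N_def nbhd_def by blast
    obtain c where c: "c \<in> Aut V E" "map c \<beta> = \<beta>" "c u1 = u2"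
      using swap[OF a(2) b(2)] by blast
    have "map (inv b \<circ> c \<circ> a) X = map (inv b) (map c (map a X))" by simp
    also have "\<dots> = map (inv b) (map b Y)" using a(3) b(3) c(2,3) by simp
    also have "\<dots> = Y" using Aut_inv_apply[OF b(1)] by (simp add: map_idI)
    finally have "map (inv b \<circ> c \<circ> a) X = Y" .
    moreover have "inv b \<circ> c \<circ> a \<in> Aut V E"
      by (intro Aut_compose Aut_inv a(1) b(1) c(1))
    ultimately show "\<exists>h\<in>Aut V E. map h X = Y" by blast
  qed
  then show False using not_trans by simp
qed

context
  fixes g :: "'a \<Rightarrow> 'a"
  assumes g_Aut: "g \<in> Aut V E"
begin

definition fixed_arc :: "'a list \<Rightarrow> bool" where
  "fixed_arc xs \<longleftrightarrow> xs \<in> arcs V E s \<and> (\<forall>z\<in>set xs. g z = z)"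

lemma fixed_arc_length: "fixed_arc xs \<Longrightarrow> length xs = s + 1"
  by (simp add: fixed_arc_def arcs_def)

lemma fixed_arc_rev: "fixed_arc xs \<Longrightarrow> fixed_arc (rev xs)"
  by (simp add: fixed_arc_def arcs_rev)

lemma fixed_arc_shift:
  assumes "fixed_arc \<beta>" "E (\<beta> ! s) w" "w \<noteq> \<beta> ! (s - 1)"
  shows "fixed_arc (tl \<beta> @ [w])"
proof -
  have "g w = w"
    using Aut_fixing_arc_fixes_extension[OF g_Aut] assms unfolding fixed_arc_def by blast
  moreover have "tl \<beta> @ [w] \<in> arcs V E s"
    using arcs_shift s_pos assms by (simp add: fixed_arc_def)
  moreover have "set (tl \<beta>) \<subseteq> set \<beta>" by (cases \<beta>) auto
  ultimately show ?thesis using assms(1) by (auto simp: fixed_arc_def)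
qed

lemma fixed_arc_shifts:
  assumes "fixed_arc \<beta>" "k \<le> s" shows "\<exists>\<gamma>. fixed_arc \<gamma> \<and> take (s + 1 - k) \<gamma> = drop k \<beta>"
  using assms(2)
proof (induction k)
  case 0
  then show ?case using assms(1) fixed_arc_length by auto
next
  case (Suc k)
  then obtain \<gamma> where \<gamma>: "fixed_arc \<gamma>" "take (s + 1 - k) \<gamma> = drop k \<beta>" by auto
  have l\<gamma>: "length \<gamma> = s + 1" using fixed_arc_length[OF \<gamma>(1)] .
  then have "\<gamma> ! s \<in> V" using \<gamma>(1) by (auto simp: fixed_arc_def arcs_def)
  then obtain w where w: "E (\<gamma> ! s) w" "w \<noteq> \<gamma> ! (s - 1)"
    using exists_third_neighbour by blast
  have "take (s - k) (tl \<gamma> @ [w]) = tl (take (s + 1 - k) \<gamma>)"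
    using l\<gamma> Suc.prems by (simp add: take_tl Suc_diff_le)
  also have "\<dots> = drop (Suc k) \<beta>" using \<gamma>(2) by (simp add: drop_Suc tl_drop)
  finally show ?case using fixed_arc_shift[OF \<gamma>(1) w] by auto
qed

lemma fixed_arc_ending_at:
  assumes "fixed_arc \<beta>" "x \<in> set \<beta>" shows "\<exists>\<gamma>. fixed_arc \<gamma> \<and> last \<gamma> = x"
proof -
  have l\<beta>: "length \<beta> = s + 1" using fixed_arc_length[OF assms(1)] .
  obtain i where i: "i \<le> s" "\<beta> ! i = x" using assms(2) l\<beta> by (metis in_set_conv_nth less_Suc_eq_le Suc_eq_plus1)
  obtain \<gamma> where \<gamma>: "fixed_arc \<gamma>" "take (i + 1) \<gamma> = drop (s - i) (rev \<beta>)"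
    using fixed_arc_shifts[OF fixed_arc_rev[OF assms(1)], of "s - i"] i(1) by auto
  have "\<gamma> ! 0 = drop (s - i) (rev \<beta>) ! 0" by (metis \<gamma>(2) nth_take zero_less_Suc Suc_eq_plus1)
  also have "\<dots> = x" using l\<beta> i by (simp add: rev_nth)
  finally have "\<gamma> ! 0 = x" .
  moreover have "\<gamma> \<noteq> []" using fixed_arc_length[OF \<gamma>(1)] by auto
  ultimately have "last (rev \<gamma>) = x" by (simp add: last_rev hd_conv_nth)
  then show ?thesis using fixed_arc_rev[OF \<gamma>(1)] by blast
qed

lemma fixed_arc_ending_at_neighbour:
  assumes "fixed_arc \<gamma>" "E (last \<gamma>) z" shows "\<exists>\<gamma>'. fixed_arc \<gamma>' \<and> last \<gamma>' = z"
proof -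
  have l\<gamma>: "length \<gamma> = s + 1" using fixed_arc_length[OF assms(1)] .
  then have "last \<gamma> = \<gamma> ! s" by (metis last_conv_nth list.size(3) add_diff_cancel_right' Zero_neq_Suc Suc_eq_plus1)
  show ?thesis
  proof (cases "z = \<gamma> ! (s - 1)")
    case True
    then show ?thesis using fixed_arc_ending_at[OF assms(1)] l\<gamma> by simp
  next
    case False
    then show ?thesis
      using fixed_arc_shift[OF assms(1)] assms(2) \<open>last \<gamma> = \<gamma> ! s\<close> by (metis last_snoc)
  qed
qed

text \<open>The last vertices of pointwise fixed s-arcs are closed under adjacency: step forward by
  shifting the arc, step back by reversing it first. Connectivity does the rest.\<close>
lemma Aut_fixing_arc_eq_id:
  assumes "\<alpha> \<in> arcs V E s" "\<forall>z\<in>set \<alpha>. g z = z" shows "g = id"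
proof -
  have \<alpha>: "fixed_arc \<alpha>" using assms by (simp add: fixed_arc_def)
  moreover have "\<alpha> \<noteq> []" using fixed_arc_length[OF \<alpha>] by auto
  ultimately have "last \<alpha> \<in> V" using assms(1) last_in_set by (auto simp: arcs_def)
  have "g y = y" if "y \<in> V" for y
  proof -
    have "E\<^sup>*\<^sup>* (last \<alpha>) y"
      using connected \<open>last \<alpha> \<in> V\<close> that by (simp add: connected_graph_def)
    then have "\<exists>\<gamma>. fixed_arc \<gamma> \<and> last \<gamma> = y"
      by (induction rule: rtranclp_induct) (use \<alpha> fixed_arc_ending_at_neighbour in blast)+
    then obtain \<gamma> where "fixed_arc \<gamma>" "last \<gamma> = y" by blast
    moreover have "\<gamma> \<noteq> []" using fixed_arc_length[OF \<open>fixed_arc \<gamma>\<close>] by auto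
    ultimately show ?thesis by (auto simp: fixed_arc_def)
  qed
  then show ?thesis using Aut_eq_id[OF g_Aut] by blast
qed

end

end

section \<open>Counting fixed edges\<close>

lemma finite_edges: "finite (edges V E)"
  using finite_V adj_in_V by (auto simp: edges_def intro: rev_finite_subset[of "Pow V"])

lemma edge_doubleton: assumes "e \<in> edges V E" shows "e \<subseteq> V \<and> card e = 2"
proof -
  obtain a b where "e = {a, b}" "E a b" using assms by (auto simp: edges_def)
  moreover from this have "a \<noteq> b" using adj_irrefl by blast
  ultimately show ?thesis using adj_in_V by auto
qed

lemma card_incident_edges:
  assumes "z \<in> V" "Q z"
  shows "card {e \<in> {{a, b} | a b. a \<in> V \<and> b \<in> V \<and> E a b \<and> Q a \<and> Q b}. z \<in> e}
         = card {w. E z w \<and> Q w}"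
proof -
  have "bij_betw (\<lambda>w. {z, w}) {w. E z w \<and> Q w}
          {e \<in> {{a, b} | a b. a \<in> V \<and> b \<in> V \<and> E a b \<and> Q a \<and> Q b}. z \<in> e}"
  proof (rule bij_betw_imageI)
    show "inj_on (\<lambda>w. {z, w}) {w. E z w \<and> Q w}"
      by (rule inj_onI) (auto simp: doubleton_eq_iff adj_irrefl)
    show "(\<lambda>w. {z, w}) ` {w. E z w \<and> Q w}
          = {e \<in> {{a, b} | a b. a \<in> V \<and> b \<in> V \<and> E a b \<and> Q a \<and> Q b}. z \<in> e}"
      using assms adj_in_V adj_sym by (auto simp: insert_commute)
  qed
  then show ?thesis by (simp add: bij_betw_same_card)
qed

lemma card_edges: "2 * card (edges V E) = 3 * card V"
proof -
  have "2 * card (edges V E) = (\<Sum>z\<in>V. card {e\<in>edges V E. z \<in> e})"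
    using sum_card_incident_doubletons[OF finite_V] edge_doubleton by simp
  also have "\<dots> = (\<Sum>z\<in>V. 3)"
  proof (rule sum.cong[OF refl])
    fix z assume "z \<in> V"
    then have "card {e\<in>edges V E. z \<in> e} = card {w. E z w \<and> True}"
      using card_incident_edges[of z "\<lambda>_. True"] by (simp add: edges_def)
    then show "card {e\<in>edges V E. z \<in> e} = 3"
      using card_nbhd[OF \<open>z \<in> V\<close>] by (simp add: nbhd_def)
  qed
  finally show ?thesis by simp
qed

lemma A_edges_subset: "A_edges V E g \<subseteq> edges V E"
  by (auto simp: A_edges_def edges_def)

lemma F_edges_subset: "F_edges V E g \<subseteq> edges V E"
  by (auto simp: F_edges_def edges_def)

lemma card_A_edges_at_fixed:
  "z \<in> V \<Longrightarrow> g z = z \<Longrightarrow> card {e\<in>A_edges V E g. z \<in> e} = card {w. E z w \<and> g w = w}"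
  using card_incident_edges[of z "\<lambda>x. g x = x"] by (simp add: A_edges_def)

lemma A_edges_at_moved: "g z \<noteq> z \<Longrightarrow> {e\<in>A_edges V E g. z \<in> e} = {}"
  by (auto simp: A_edges_def)

lemma sum_card_A_edges_at: "(\<Sum>z\<in>V. card {e\<in>A_edges V E g. z \<in> e}) = 2 * card (A_edges V E g)"
  using sum_card_incident_doubletons[OF finite_V] A_edges_subset edge_doubleton by blast

lemma Vi_iff:
  assumes "i > 0"
  shows "z \<in> Vi V E g i \<longleftrightarrow> z \<in> V \<and> g z = z \<and> card {w. E z w \<and> g w = w} = i"
proof
  assume z: "z \<in> Vi V E g i"
  then have "z \<in> V" "g z = z" by (auto simp: Vi_def A_edges_def)
  then show "z \<in> V \<and> g z = z \<and> card {w. E z w \<and> g w = w} = i"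
    using z card_A_edges_at_fixed by (simp add: Vi_def fix_valency_def)
next
  assume z: "z \<in> V \<and> g z = z \<and> card {w. E z w \<and> g w = w} = i"
  then have "card {e\<in>A_edges V E g. z \<in> e} = i" using card_A_edges_at_fixed by simp
  moreover from this have "{e\<in>A_edges V E g. z \<in> e} \<noteq> {}" using assms by (metis card.empty less_irrefl)
  ultimately show "z \<in> Vi V E g i" using z by (auto simp: Vi_def fix_valency_def)
qed

lemma F_edge_eq:
  assumes "e \<in> F_edges V E g" "x \<in> e"
  shows "e = {x, g x} \<and> g x \<noteq> x \<and> E x (g x) \<and> x \<in> V"
  using assms adj_sym by (auto simp: F_edges_def)

lemma card_Union_F_edges: "card (\<Union>(F_edges V E g)) = 2 * card (F_edges V E g)"
proof -
  have "card (\<Union>(F_edges V E g)) = sum card (F_edges V E g)"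
  proof (rule card_Union_disjoint)
    show "pairwise disjnt (F_edges V E g)"
      unfolding pairwise_def disjnt_def
    proof (intro ballI impI)
      fix e1 e2 assume "e1 \<in> F_edges V E g" "e2 \<in> F_edges V E g" "e1 \<noteq> e2"
      then show "e1 \<inter> e2 = {}" using F_edge_eq by blast
    qed
  qed (auto simp: F_edges_def)
  also have "\<dots> = (\<Sum>e\<in>F_edges V E g. 2)"
    by (rule sum.cong[OF refl]) (auto simp: F_edges_def)
  finally show ?thesis by simp
qed

lemma Union_F_edges_moved: "\<Union>(F_edges V E g) \<subseteq> {x\<in>V. g x \<noteq> x}"
  using F_edge_eq by blast

text \<open>A fixed edge lies in \<open>A\<close> or \<open>F\<close>, and there are \<open>3|V|/2\<close> edges.\<close>
lemma card_V_less_if_fpr: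
  assumes "fpr_edges V E g > 1 / 3"
  shows "card V < 2 * card (A_edges V E g) + 2 * card (F_edges V E g)"
proof -
  let ?X = "{e \<in> edges V E. g ` e = e}"
  have "?X \<subseteq> A_edges V E g \<union> F_edges V E g"
  proof
    fix e assume "e \<in> ?X"
    then obtain a b where e: "e = {a, b}" "a \<in> V" "b \<in> V" "E a b" "{g a, g b} = {a, b}"
      by (auto simp: edges_def)
    then have "a \<noteq> b" using adj_irrefl by auto
    with e show "e \<in> A_edges V E g \<union> F_edges V E g"
      by (auto simp: A_edges_def F_edges_def doubleton_eq_iff)
  qed
  then have "card ?X \<le> card (A_edges V E g) + card (F_edges V E g)"
    using finite_edges A_edges_subset F_edges_subset
    by (meson card_Un_le card_mono finite_UnI infinite_super le_trans)
  moreover have pos: "card (edges V E) > 0"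
    using assms by (auto simp: fpr_edges_def intro: gr0I)
  moreover have "real (card (edges V E)) < 3 * real (card ?X)"
    using assms pos by (simp add: fpr_edges_def field_simps)
  ultimately show ?thesis using card_edges by linarith
qed

lemma two_card_F_edges_le_moved: "2 * card (F_edges V E g) \<le> card {x\<in>V. g x \<noteq> x}"
  using card_mono[OF _ Union_F_edges_moved] finite_V card_Union_F_edges by simp

lemma card_fixed_neighbours_le_1:
  assumes "z \<in> V" "g z = z" and s: "s = 2" "arc_transitive V E s" "\<not> arc_transitive V E (s + 1)"
    and g: "g \<in> Aut V E" "g \<noteq> id"
  shows "card {u. E z u \<and> g u = u} \<le> 1"
proof (rule ccontr)
  assume "\<not> card {u. E z u \<and> g u = u} \<le> 1"
  then obtain u1 u2 where "E z u1" "g u1 = u1" "E z u2" "g u2 = u2" "u1 \<noteq> u2"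
    using finite_adj_set[OF assms(1)] by (auto simp: card_le_Suc0_iff_eq)
  then have "[u1, z, u2] \<in> arcs V E s" "\<forall>x\<in>set [u1, z, u2]. g x = x"
    using arcs_2I[OF adj_sym] s(1) assms(2) by auto
  moreover have "s \<ge> 1" using s(1) by simp
  ultimately have "g = id" using Aut_fixing_arc_eq_id[OF _ s(2,3) g(1)] by blast
  then show False using g(2) by contradiction
qed

lemma A_F_edges_bound_if_fixed_valency_le_1:
  assumes "\<And>z. z \<in> V \<Longrightarrow> g z = z \<Longrightarrow> card {u. E z u \<and> g u = u} \<le> 1"
  shows "2 * card (A_edges V E g) + 2 * card (F_edges V E g) \<le> card V"
proof -
  have "2 * card (A_edges V E g) = (\<Sum>z\<in>V. card {e\<in>A_edges V E g. z \<in> e})"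
    by (simp add: sum_card_A_edges_at)
  also have "\<dots> \<le> (\<Sum>z\<in>V. if g z = z then 1 else 0)"
  proof (rule sum_mono)
    fix z assume "z \<in> V"
    show "card {e\<in>A_edges V E g. z \<in> e} \<le> (if g z = z then 1 else 0)"
    proof (cases "g z = z")
      case True
      then show ?thesis using assms \<open>z \<in> V\<close> card_A_edges_at_fixed by simp
    next
      case False
      then show ?thesis by (simp add: A_edges_at_moved)
    qed
  qed
  also have "\<dots> = card {z\<in>V. g z = z}"
    using finite_V by (simp add: sum.If_cases Int_def)
  finally show ?thesis
    using two_card_F_edges_le_moved[of g] card_fixed_moved_partition[OF finite_V, of g] by simp
qed

section \<open>Short cycles\<close>

lemma no_triangle:
  assumes "arc_transitive V E 3" "E a b" "E b c" "E c a" shows False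
proof -
  have "a \<noteq> c" "b \<noteq> a" using assms(2,4) adj_irrefl by auto
  moreover obtain t where t: "E c t" "t \<noteq> a" "t \<noteq> b"
    using exists_third_neighbour adj_in_V assms(3) by blast
  ultimately have "[a, b, c, a] \<in> arcs V E 3" "[a, b, c, t] \<in> arcs V E 3"
    using arcs_3I assms(2-4) by auto
  then obtain h where "map h [a, b, c, a] = [a, b, c, t]"
    using assms(1) unfolding arc_transitive_def by blast
  then show False using t(2) by auto
qed

lemma no_square:
  assumes "arc_transitive V E 4" "E a b" "E b c" "E c d" "E d a" "a \<noteq> c" "b \<noteq> d"
  shows False
proof -
  obtain t where t: "E d t" "t \<noteq> a" "t \<noteq> c"
    using exists_third_neighbour adj_in_V assms(4) by blast
  have "[a, b, c, d, a] \<in> arcs V E 4" "[a, b, c, d, t] \<in> arcs V E 4"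
    using arcs_4I assms(2-7) t by auto
  then obtain h where "map h [a, b, c, d, a] = [a, b, c, d, t]"
    using assms(1) unfolding arc_transitive_def by blast
  then show False using t(2) by auto
qed

lemma square_through_3_arc:
  assumes "arc_transitive V E 3" "[a0, b0, c0, d0] \<in> arcs V E 3" "E d0 a0"
    "E a b" "E b c" "E c d" "a \<noteq> c" "b \<noteq> d"
  shows "E a d"
proof -
  obtain h where h: "h \<in> Aut V E" "map h [a0, b0, c0, d0] = [a, b, c, d]"
    using assms(1,2) arcs_3I[OF assms(4-8)] unfolding arc_transitive_def by blast
  then show ?thesis using Aut_adj[OF h(1) assms(3)] adj_sym by simp
qed

text \<open>A 3-arc transitive cubic graph with a 4-cycle is \<open>K\<^sub>3\<^sub>,\<^sub>3\<close>: since every 3-arc closes up to a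
  4-cycle, the neighbourhoods of both colour classes coincide.\<close>
lemma K33_if_square:
  assumes t3: "arc_transitive V E 3" and v: "E v x" "E v y" "E v w" and v': "E v' x" "E v' y"
    and distinct: "x \<noteq> y" "v \<noteq> v'" "w \<noteq> x" "w \<noteq> y"
  obtains q where "V = {v, v', q, x, y, w}" "distinct [v, v', q, x, y, w]"
    "nbhd E v = {x, y, w}" "nbhd E v' = {x, y, w}" "nbhd E q = {x, y, w}"
    "nbhd E x = {v, v', q}" "nbhd E y = {v, v', q}" "nbhd E w = {v, v', q}"
proof -
  have "[x, v, y, v'] \<in> arcs V E 3"
    using arcs_3I[OF adj_sym[OF v(1)] v(2) adj_sym[OF v'(2)]] distinct by simp
  note square = square_through_3_arc[OF t3 this v'(1)]
  obtain q where q: "E x q" "q \<noteq> v" "q \<noteq> v'"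
    using exists_third_neighbour adj_in_V v(1) by blast
  have v'w: "E v' w" using square[OF v'(1) adj_sym[OF v(1)] v(3)] distinct by simp
  have qy: "E q y" using square[OF adj_sym[OF q(1)] adj_sym[OF v(1)] v(2) q(2)] distinct by simp
  have qw: "E q w" using square[OF adj_sym[OF q(1)] adj_sym[OF v(1)] v(3) q(2)] distinct by simp
  have in_V: "v \<in> V" "v' \<in> V" "q \<in> V" "x \<in> V" "y \<in> V" "w \<in> V"
    using adj_in_V v v' q by blast+
  have nbhds: "nbhd E v = {x, y, w}" "nbhd E v' = {x, y, w}" "nbhd E q = {x, y, w}"
    "nbhd E x = {v, v', q}" "nbhd E y = {v, v', q}" "nbhd E w = {v, v', q}"
    using nbhd_eq_three_neighbours in_V v v' v'w q qy qw adj_sym distinct by metis+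
  have "V \<subseteq> {v, v', q, x, y, w}"
  proof
    fix z assume "z \<in> V"
    then have "E\<^sup>*\<^sup>* v z" using connected in_V(1) by (simp add: connected_graph_def)
    then show "z \<in> {v, v', q, x, y, w}"
      by (induction rule: rtranclp_induct) (use nbhds in \<open>auto simp: nbhd_def set_eq_iff\<close>)
  qed
  then have V: "V = {v, v', q, x, y, w}" using in_V by blast
  have "v \<noteq> x" "v \<noteq> y" "v \<noteq> w" "v' \<noteq> x" "v' \<noteq> y" "v' \<noteq> w" "q \<noteq> x" "q \<noteq> y" "q \<noteq> w"
    using adj_irrefl v v' q qy qw v'w by metis+
  then have "distinct [v, v', q, x, y, w]" using q distinct by auto
  then show ?thesis using that V nbhds by blast
qed

lemma A_F_edges_bound_if_square:
  assumes t3: "arc_transitive V E 3" and g: "g \<in> Aut V E"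
    and v: "g v = v" "E v w" "g w = w" "E v x" "g x \<noteq> x"
    and v': "v' \<noteq> v" "g v' = v'" "E v' x" "E v' (g x)"
  shows "2 * card (A_edges V E g) + 2 * card (F_edges V E g) \<le> card V"
proof -
  have gy: "g (g x) \<noteq> g x" using v(5) Aut_eq_iff[OF g] by simp
  have "E v (g x)" using Aut_adj[OF g v(4)] v(1) by simp
  moreover have "g x \<noteq> w" using gy v(3) by auto
  ultimately obtain q where V: "V = {v, v', q, x, g x, w}" and dist: "distinct [v, v', q, x, g x, w]"
    and nbhds: "nbhd E x = {v, v', q}" "nbhd E (g x) = {v, v', q}" "nbhd E w = {v, v', q}"
      "nbhd E v = {x, g x, w}" "nbhd E v' = {x, g x, w}" "nbhd E q = {x, g x, w}"
    using K33_if_square[OF t3 v(4) _ v(2) v'(3,4)] v v' by metis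
  have "q \<in> nbhd E x" using nbhds(1) by simp
  then have "E (g x) (g q)" using Aut_adj[OF g] by (simp add: nbhd_def)
  then have "g q = q"
    using nbhds(2) Aut_eq_iff[OF g, of q v] Aut_eq_iff[OF g, of q v'] v(1) v'(2) dist
    by (auto simp: nbhd_def)
  then have moved: "z \<in> {x, g x}" if "z \<in> V" "g z \<noteq> z" for z
    using that V v(1,3) v'(2) by auto
  have "A_edges V E g \<subseteq> {{v, w}, {v', w}, {q, w}}"
  proof
    fix e assume "e \<in> A_edges V E g"
    then obtain a b where e: "e = {a, b}" "E a b" "a \<in> V" "b \<in> V" "g a = a" "g b = b"
      by (auto simp: A_edges_def)
    then have "a \<in> {v, v', q, w}" "b \<in> {v, v', q, w}" using V v(5) gy by auto
    then show "e \<in> {{v, w}, {v', w}, {q, w}}"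
      using e(1,2) dist by (auto simp: adj_iff_in_nbhd nbhds)
  qed
  moreover have "card {{v, w}, {v', w}, {q, w}} \<le> 3" by (simp add: card_insert_if)
  ultimately have "card (A_edges V E g) \<le> 3" by (meson card_mono finite.emptyI finite.insertI le_trans)
  moreover have "F_edges V E g = {}"
  proof (rule ccontr)
    assume "F_edges V E g \<noteq> {}"
    then obtain a where "a \<in> V" "g a \<noteq> a" "E a (g a)"
      by (auto simp: F_edges_def)
    moreover have "g a \<in> V" "g (g a) \<noteq> g a" using calculation Aut_in_V_iff[OF g] Aut_eq_iff[OF g] by auto
    ultimately have "a \<in> {x, g x}" "g a \<in> {x, g x}" "E a (g a)" using moved by auto
    then show False using dist by (auto simp: adj_iff_in_nbhd nbhds)
  qed
  moreover have "card V = 6" using V distinct_card[OF dist] by simp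
  ultimately show ?thesis by simp
qed

lemma A_F_edges_bound_if_short_cycle:
  assumes s: "s \<ge> 3" "arc_transitive V E s" and g: "g \<in> Aut V E"
    and v: "g v = v" "E v w" "g w = w" "E v x" "g x \<noteq> x"
    and cycle: "E x (g x) \<or> (\<exists>v'. v' \<noteq> v \<and> g v' = v' \<and> E v' x \<and> E v' (g x))"
  shows "2 * card (A_edges V E g) + 2 * card (F_edges V E g) \<le> card V"
proof -
  have t3: "arc_transitive V E 3" using arc_transitive_le[OF s(2,1)] .
  have vgx: "E v (g x)" using Aut_adj[OF g v(4)] v(1) by simp
  then have "\<not> E x (g x)" using no_triangle[OF t3 v(4)] adj_sym by blast
  then obtain v' where v': "v' \<noteq> v" "g v' = v'" "E v' x" "E v' (g x)" using cycle by blast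
  show ?thesis
  proof (cases "s = 3")
    case True
    then show ?thesis using A_F_edges_bound_if_square[OF t3 g v v'] by blast
  next
    case False
    then have "arc_transitive V E 4" using arc_transitive_le[OF s(2)] s(1) by simp
    moreover have "x \<noteq> g x" using v(5) by simp
    ultimately show ?thesis
      using no_square[OF _ adj_sym[OF v(4)] vgx adj_sym[OF v'(4)] v'(3)] v'(1) by blast
  qed
qed

section \<open>Private moved pairs\<close>

lemma card_fixed_plus_moved_neighbours:
  assumes "z \<in> V"
  shows "card {u. E z u \<and> g u = u} + card {u. E z u \<and> g u \<noteq> u} = 3"
proof -
  have "nbhd E z = {u. E z u \<and> g u = u} \<union> {u. E z u \<and> g u \<noteq> u}" by (auto simp: nbhd_def)
  moreover have "card ({u. E z u \<and> g u = u} \<union> {u. E z u \<and> g u \<noteq> u})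
      = card {u. E z u \<and> g u = u} + card {u. E z u \<and> g u \<noteq> u}"
    by (rule card_Un_disjoint) (auto simp: finite_adj_set[OF assms])
  ultimately show ?thesis using card_nbhd[OF assms] by simp
qed

definition moved_pairs_private :: "('a \<Rightarrow> 'a) \<Rightarrow> bool" where
  "moved_pairs_private g \<longleftrightarrow>
     (\<forall>v w x. v \<in> V \<and> g v = v \<and> E v w \<and> g w = w \<and> E v x \<and> g x \<noteq> x \<longrightarrow>
        \<not> E x (g x) \<and> (\<forall>v'. v' \<noteq> v \<and> g v' = v' \<and> E v' x \<longrightarrow> \<not> E v' (g x)))"

lemma moved_pairs_privateD:
  assumes "moved_pairs_private g" "v \<in> V" "g v = v" "E v w" "g w = w" "E v x" "g x \<noteq> x"
  shows "\<not> E x (g x)" and "v' \<noteq> v \<Longrightarrow> g v' = v' \<Longrightarrow> E v' x \<Longrightarrow> \<not> E v' (g x)"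
  using assms unfolding moved_pairs_private_def by blast+

lemma F_edges_and_V1_bound_moved:
  assumes g: "g \<in> Aut V E" and pairs_private: "moved_pairs_private g"
  shows "2 * card (F_edges V E g) + 2 * card (Vi V E g 1) \<le> card {x\<in>V. g x \<noteq> x}"
proof -
  define V1 where "V1 = Vi V E g 1"
  define P where "P z = {u. E z u \<and> g u \<noteq> u}" for z
  have V1: "z \<in> V" "g z = z" "card {u. E z u \<and> g u = u} = 1" if "z \<in> V1" for z
    using that Vi_iff[of 1] by (simp_all add: V1_def)
  have has_fixed_neighbour: "\<exists>w. E z w \<and> g w = w" if "z \<in> V1" for z
  proof -
    have "{u. E z u \<and> g u = u} \<noteq> {}" using V1(3)[OF that] by (metis card.empty zero_neq_one)
    then show ?thesis by blast
  qed
  have card_P: "card (P z) = 2" if "z \<in> V1" for z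
    using card_fixed_plus_moved_neighbours[OF V1(1)[OF that], of g] V1(3)[OF that]
    by (simp add: P_def)
  have finite_P: "finite (P z)" if "z \<in> V1" for z
    using finite_adj_set[OF V1(1)[OF that]] by (simp add: P_def)
  have P_disjoint: "P i \<inter> P j = {}" if i: "i \<in> V1" and j: "j \<in> V1" and "i \<noteq> j" for i j
  proof (rule ccontr)
    assume "P i \<inter> P j \<noteq> {}"
    then obtain x where "E i x" "E j x" "g x \<noteq> x" by (auto simp: P_def)
    moreover have "E j (g x)" using Aut_adj[OF g \<open>E j x\<close>] V1(2)[OF j] by simp
    moreover obtain w where "E i w" "g w = w" using has_fixed_neighbour[OF i] by blast
    ultimately show False
      using moved_pairs_privateD(2)[OF pairs_private V1(1,2)[OF i]] V1(2)[OF j] \<open>i \<noteq> j\<close>[symmetric]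
      by blast
  qed
  have F_P_disjoint: "\<Union>(F_edges V E g) \<inter> \<Union>(P ` V1) = {}"
  proof (rule ccontr)
    assume "\<Union>(F_edges V E g) \<inter> \<Union>(P ` V1) \<noteq> {}"
    then obtain x e z where "e \<in> F_edges V E g" "x \<in> e" "z \<in> V1" "E z x" "g x \<noteq> x"
      by (auto simp: P_def)
    moreover obtain w where "E z w" "g w = w" using has_fixed_neighbour[OF \<open>z \<in> V1\<close>] by blast
    ultimately show False
      using F_edge_eq moved_pairs_privateD(1)[OF pairs_private V1(1,2)] by blast
  qed
  have finite_V1: "finite V1" using V1(1) finite_V by (blast intro: finite_subset)
  have finite_UF: "finite (\<Union>(F_edges V E g))"
    by (rule finite_subset[OF Union_F_edges_moved]) (simp add: finite_V)
  have finite_UP: "finite (\<Union>(P ` V1))" using finite_V1 finite_P by blast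
  have "card (\<Union>(P ` V1)) = (\<Sum>z\<in>V1. card (P z))"
    by (rule card_UN_disjoint[OF finite_V1]) (use finite_P P_disjoint in auto)
  then have "card (\<Union>(P ` V1)) = 2 * card V1" using card_P by simp
  then have "card (\<Union>(F_edges V E g) \<union> \<Union>(P ` V1)) = 2 * card (F_edges V E g) + 2 * card V1"
    using card_Un_disjoint[OF finite_UF finite_UP F_P_disjoint] card_Union_F_edges by simp
  moreover have "\<Union>(F_edges V E g) \<union> \<Union>(P ` V1) \<subseteq> {x\<in>V. g x \<noteq> x}"
    using Union_F_edges_moved adj_in_V by (auto simp: P_def)
  then have "card (\<Union>(F_edges V E g) \<union> \<Union>(P ` V1)) \<le> card {x\<in>V. g x \<noteq> x}"
    by (rule card_mono[rotated]) (simp add: finite_V)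
  ultimately show ?thesis by (simp add: V1_def)
qed

lemma bound_if_moved_pairs_private:
  assumes "g \<in> Aut V E" "moved_pairs_private g"
  shows "2 * card (F_edges V E g) + 3 * card (Vi V E g 1) + card (Vi V E g 3) \<le> card V"
proof -
  have sub: "Vi V E g 1 \<union> Vi V E g 3 \<subseteq> {z\<in>V. g z = z}" by (auto simp: Vi_iff)
  moreover have fin: "finite {z\<in>V. g z = z}" by (simp add: finite_V)
  ultimately have "card (Vi V E g 1 \<union> Vi V E g 3) \<le> card {z\<in>V. g z = z}"
    by (rule card_mono[rotated])
  moreover have "card (Vi V E g 1 \<union> Vi V E g 3) = card (Vi V E g 1) + card (Vi V E g 3)"
    by (rule card_Un_disjoint) (use finite_subset[OF sub fin] in \<open>auto simp: Vi_iff\<close>)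
  ultimately show ?thesis
    using F_edges_and_V1_bound_moved[OF assms] card_fixed_moved_partition[OF finite_V, of g]
    by linarith
qed

lemma moved_pairs_private_if_fpr:
  assumes s: "s \<ge> 1" "arc_transitive V E s" "\<not> arc_transitive V E (s + 1)"
    and g: "g \<in> Aut V E" "g \<noteq> id" and fpr: "fpr_edges V E g > 1 / 3"
  shows "moved_pairs_private g"
proof (rule ccontr)
  assume "\<not> moved_pairs_private g"
  then obtain v w x where v: "v \<in> V" "g v = v" "E v w" "g w = w" "E v x" "g x \<noteq> x"
    and cycle: "E x (g x) \<or> (\<exists>v'. v' \<noteq> v \<and> g v' = v' \<and> E v' x \<and> E v' (g x))"
    unfolding moved_pairs_private_def by blast
  consider "s = 1" | "s = 2" | "s \<ge> 3" using s(1) by linarith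
  then have "2 * card (A_edges V E g) + 2 * card (F_edges V E g) \<le> card V"
  proof cases
    case 1
    then have "[v, w] \<in> arcs V E s" using arcs_1I[OF v(3)] by simp
    then have "g = id" using Aut_fixing_arc_eq_id[OF s g(1)] v(2,4) by simp
    then show ?thesis using g(2) by contradiction
  next
    case 2
    then show ?thesis
      using A_F_edges_bound_if_fixed_valency_le_1 card_fixed_neighbours_le_1[OF _ _ 2 s(2,3) g] by blast
  next
    case 3
    then show ?thesis using A_F_edges_bound_if_short_cycle[OF _ s(2) g(1) v(2-6) cycle] by blast
  qed
  then show False using card_V_less_if_fpr[OF fpr] by linarith
qed

end

theorem lemma5p1:
  fixes V :: "'a set" and E :: "'a \<Rightarrow> 'a \<Rightarrow> bool" and g :: "'a \<Rightarrow> 'a"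
    and v :: 'a and s :: nat
  assumes "simple_graph V E" and "connected_graph V E" and "cubic V E"
    and "vertex_transitive V E"
    and "v \<in> V"
    and "\<forall>u\<in>nbhd E v. \<forall>w\<in>nbhd E v. \<exists>h\<in>Aut V E. h v = v \<and> h u = w"
    and "s \<ge> 1" and "arc_transitive V E s" and "\<not> arc_transitive V E (s + 1)"
    and "g \<in> Aut V E" and "g \<noteq> id"
    and "fpr_edges V E g > 1 / 3"
  shows "2 * card (F_edges V E g) + 3 * card (Vi V E g 1) + card (Vi V E g 3) \<le> card V"
proof -
  interpret cubic_graph V E using assms(1-3) by unfold_locales
  show ?thesis
    using bound_if_moved_pairs_private[OF assms(10) moved_pairs_private_if_fpr[OF assms(7-12)]] .
qed

end
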